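(* The direct product $\mathbb{N}\times\mathbb{N}$ contains uncountably many pairwise non-isomorphic subsemigroups.
   Context: $\mathbb{N}=\{1,2,3,\dots\}$ denotes the free monogenic semigroup, i.e. the positive integers under addition; $\mathbb{N}\times\mathbb{N}$ is the direct product with componentwise addition. *)

theory Defs
  imports "HOL-Library.Countable_Set"
begin

text \<open>The free monogenic semigroup N = {1,2,3,...} under addition; N x N with
componentwise addition, carried by pairs of positive naturals.\<close>

definition NN :: "(nat \<times> nat) set" where
  "NN = {(a, b). 1 \<le> a \<and> 1 \<le> b}"

definition padd :: "nat \<times> nat \<Rightarrow> nat \<times> nat \<Rightarrow> nat \<times> nat" where
  "padd x y = (fst x + fst y, snd x + snd y)"

definition subsemigroup_NN :: "(nat \<times> nat) set \<Rightarrow> bool" where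
  "subsemigroup_NN S \<longleftrightarrow> S \<subseteq> NN \<and> S \<noteq> {} \<and> (\<forall>x\<in>S. \<forall>y\<in>S. padd x y \<in> S)"

definition sg_isomorphic :: "(nat \<times> nat) set \<Rightarrow> (nat \<times> nat) set \<Rightarrow> bool" where
  "sg_isomorphic S T \<longleftrightarrow>
     (\<exists>f. bij_betw f S T \<and> (\<forall>x\<in>S. \<forall>y\<in>S. f (padd x y) = padd (f x) (f y)))"

end

theory Submission
  imports Defs
begin

text \<open>A homomorphism on a subsemigroup S of N x N commutes with positive integer
linear combinations. If x, y \<in> S are linearly independent, every z \<in> S satisfies an
integer relation D z = \<alpha> x + \<beta> y with D \<noteq> 0, which can be rewritten with positive
coefficients on both sides; hence a homomorphism on S is determined by its values at
x and y, and S has only countably many isomorphic copies inside N x N. On the other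
hand the subsemigroups {(a, b). a \<ge> 2} \<union> {(1, n + 1) | n \<in> B}, for B \<subseteq> N, are
uncountably many, so they fall into uncountably many isomorphism classes.\<close>

definition padd_closed :: "(nat \<times> nat) set \<Rightarrow> bool" where
  "padd_closed S \<longleftrightarrow> (\<forall>x\<in>S. \<forall>y\<in>S. padd x y \<in> S)"

definition hom_on :: "(nat \<times> nat) set \<Rightarrow> (nat \<times> nat \<Rightarrow> nat \<times> nat) \<Rightarrow> bool" where
  "hom_on S f \<longleftrightarrow> (\<forall>x\<in>S. \<forall>y\<in>S. f (padd x y) = padd (f x) (f y))"

definition smul :: "nat \<Rightarrow> nat \<times> nat \<Rightarrow> nat \<times> nat" where
  "smul k p = (k * fst p, k * snd p)"

definition lincomb :: "nat \<Rightarrow> nat \<Rightarrow> nat \<Rightarrow> nat \<times> nat \<Rightarrow> nat \<times> nat \<Rightarrow> nat \<times> nat \<Rightarrow> nat \<times> nat" where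
  "lincomb a b c z x y = padd (smul a z) (padd (smul b x) (smul c y))"

definition det :: "nat \<times> nat \<Rightarrow> nat \<times> nat \<Rightarrow> int" where
  "det x y = int (fst x) * int (snd y) - int (snd x) * int (fst y)"

lemma subsemigroup_NN_padd_closed: "subsemigroup_NN S \<Longrightarrow> padd_closed S"
  unfolding subsemigroup_NN_def padd_closed_def by blast

lemma sg_isomorphic_iff_hom_on: "sg_isomorphic S T \<longleftrightarrow> (\<exists>f. bij_betw f S T \<and> hom_on S f)"
  unfolding sg_isomorphic_def hom_on_def by blast

lemma hom_on_smul:
  assumes cl: "padd_closed S" and f: "hom_on S f" and s: "s \<in> S" and "k > 0"
  shows "smul k s \<in> S \<and> f (smul k s) = smul k (f s)"
  using \<open>k > 0\<close>
proof (induction k rule: nat_induct_non_zero)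
  case 1
  show ?case using s by (simp add: smul_def)
next
  case (Suc k)
  have "smul (Suc k) p = padd (smul k p) p" for p
    by (simp add: smul_def padd_def)
  then show ?case using Suc.IH cl f s unfolding padd_closed_def hom_on_def by auto
qed

lemma hom_on_lincomb:
  assumes "padd_closed S" "hom_on S f" "z \<in> S" "x \<in> S" "y \<in> S" "a > 0" "b > 0" "c > 0"
  shows "f (lincomb a b c z x y) = lincomb a b c (f z) (f x) (f y)"
  using hom_on_smul[OF assms(1,2)] assms unfolding lincomb_def padd_closed_def hom_on_def
  by (metis (no_types, lifting))

lemma lincomb_eq_iff:
  "lincomb a b c z x y = lincomb a' b' c' z x y \<longleftrightarrow>
     (int a - int a') * int (fst z) = (int b' - int b) * int (fst x) + (int c' - int c) * int (fst y) \<and>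
     (int a - int a') * int (snd z) = (int b' - int b) * int (snd x) + (int c' - int c) * int (snd y)"
  unfolding lincomb_def padd_def smul_def prod_eq_iff fst_conv snd_conv
  by (simp only: of_nat_eq_iff[symmetric, where 'a = int]) (simp add: algebra_simps)

lemma hom_on_determined:
  assumes cl: "padd_closed S" and f: "hom_on S f" and g: "hom_on S g"
    and x: "x \<in> S" and y: "y \<in> S" and z: "z \<in> S" and indep: "det x y \<noteq> 0"
    and fx: "f x = g x" and fy: "f y = g y"
  shows "f z = g z"
proof -
  define D where "D = det x y"
  define \<alpha> where "\<alpha> = det z y"
  define \<beta> where "\<beta> = det x z"
  \<comment> \<open>Cramer's rule: D z = \<alpha> x + \<beta> y; adding 1 to every coefficient keeps them positive.\<close>
  define a a' b b' c c' where "a = nat D + 1" and "a' = nat (- D) + 1"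
    and "b = nat (- \<alpha>) + 1" and "b' = nat \<alpha> + 1" and "c = nat (- \<beta>) + 1" and "c' = nat \<beta> + 1"
  note coeffs = a_def a'_def b_def b'_def c_def c'_def
  have diffs: "int a - int a' = D" "int b' - int b = \<alpha>" "int c' - int c = \<beta>"
    unfolding coeffs by simp_all
  have rel: "lincomb a b c z x y = lincomb a' b' c' z x y"
    unfolding lincomb_eq_iff diffs D_def \<alpha>_def \<beta>_def det_def by (simp add: algebra_simps)
  have pos: "a > 0" "b > 0" "c > 0" "a' > 0" "b' > 0" "c' > 0"
    unfolding coeffs by simp_all
  have "lincomb a b c (h z) (h x) (h y) = lincomb a' b' c' (h z) (h x) (h y)"
    if "hom_on S h" for h
    using rel hom_on_lincomb[OF cl that z x y] pos by metis
  from this[OF f] this[OF g] have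
    "D * int (fst (f z)) = D * int (fst (g z))" "D * int (snd (f z)) = D * int (snd (g z))"
    unfolding lincomb_eq_iff diffs fx fy by simp_all
  then show ?thesis using indep by (simp add: D_def prod_eq_iff)
qed

lemma countable_isomorphic_copies:
  assumes cl: "padd_closed S" and x: "x \<in> S" and y: "y \<in> S" and indep: "det x y \<noteq> 0"
  shows "countable {T. sg_isomorphic S T}"
proof -
  define copy where "copy uv = (SOME T. \<exists>f. bij_betw f S T \<and> hom_on S f \<and> (f x, f y) = uv)"
    for uv :: "(nat \<times> nat) \<times> (nat \<times> nat)"
  have "T \<in> range copy" if iso: "sg_isomorphic S T" for T
  proof -
    obtain f where f: "bij_betw f S T" "hom_on S f"
      using iso unfolding sg_isomorphic_iff_hom_on by blast
    have "\<exists>g. bij_betw g S (copy (f x, f y)) \<and> hom_on S g \<and> (g x, g y) = (f x, f y)"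
      unfolding copy_def by (rule someI_ex) (use f in blast)
    then obtain g where g: "bij_betw g S (copy (f x, f y))" "hom_on S g" "g x = f x" "g y = f y"
      by blast
    have "g z = f z" if "z \<in> S" for z
      using hom_on_determined[OF cl g(2) f(2) x y that indep g(3,4)] .
    then have "g ` S = f ` S"
      by (rule image_cong[OF refl])
    then have "copy (f x, f y) = T"
      using g(1) f(1) by (simp add: bij_betw_def)
    then show ?thesis by (metis rangeI)
  qed
  then have "{T. sg_isomorphic S T} \<subseteq> range copy"
    by blast
  then show ?thesis
    by (rule countable_subset) simp
qed

lemma sg_isomorphic_refl: "sg_isomorphic S S"
  unfolding sg_isomorphic_def by (rule exI[of _ id]) simp

lemma sg_isomorphic_sym:
  assumes cl: "padd_closed S" and iso: "sg_isomorphic S T"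
  shows "sg_isomorphic T S"
proof -
  obtain f where f: "bij_betw f S T" and hom: "hom_on S f"
    using iso unfolding sg_isomorphic_iff_hom_on by blast
  define g where "g = inv_into S f"
  have g: "bij_betw g T S" unfolding g_def by (rule bij_betw_inv_into[OF f])
  have g_inv: "g a \<in> S \<and> f (g a) = a" if "a \<in> T" for a
    using that f unfolding g_def by (auto simp: bij_betw_def f_inv_into_f inv_into_into)
  have "g (padd a b) = padd (g a) (g b)" if "a \<in> T" "b \<in> T" for a b
  proof -
    have "padd (g a) (g b) \<in> S" "f (padd (g a) (g b)) = padd a b"
      using cl hom g_inv that unfolding padd_closed_def hom_on_def by auto
    then show ?thesis
      using f unfolding g_def by (metis bij_betw_def inv_into_f_f)
  qed
  then show ?thesis
    unfolding sg_isomorphic_iff_hom_on hom_on_def using g by blast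
qed

lemma sg_isomorphic_trans:
  assumes "sg_isomorphic S T" "sg_isomorphic T U"
  shows "sg_isomorphic S U"
proof -
  obtain f g where f: "bij_betw f S T" "hom_on S f" and g: "bij_betw g T U" "hom_on T g"
    using assms unfolding sg_isomorphic_iff_hom_on by blast
  have "bij_betw (g \<circ> f) S U"
    using f(1) g(1) by (rule bij_betw_trans)
  moreover have "hom_on S (g \<circ> f)"
    using f g by (auto simp: hom_on_def bij_betw_def)
  ultimately show ?thesis
    unfolding sg_isomorphic_iff_hom_on by blast
qed

lemma equiv_sg_isomorphic:
  assumes "\<And>S. S \<in> U \<Longrightarrow> padd_closed S"
  shows "equiv U {(S, T). S \<in> U \<and> T \<in> U \<and> sg_isomorphic S T}"
proof (rule equivI)
  show "{(S, T). S \<in> U \<and> T \<in> U \<and> sg_isomorphic S T} \<subseteq> U \<times> U"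
    "refl_on U {(S, T). S \<in> U \<and> T \<in> U \<and> sg_isomorphic S T}"
    by (auto intro: refl_onI sg_isomorphic_refl)
  show "sym {(S, T). S \<in> U \<and> T \<in> U \<and> sg_isomorphic S T}"
    using assms by (auto intro: symI sg_isomorphic_sym)
  show "trans {(S, T). S \<in> U \<and> T \<in> U \<and> sg_isomorphic S T}"
    by (auto intro: transI sg_isomorphic_trans)
qed

lemma uncountable_inequivalent_subset:
  assumes eq: "equiv U R" and unc: "uncountable U"
    and classes: "\<And>x. x \<in> U \<Longrightarrow> countable (R `` {x})"
  obtains F where "F \<subseteq> U" "uncountable F" "\<And>x y. x \<in> F \<Longrightarrow> y \<in> F \<Longrightarrow> (x, y) \<in> R \<Longrightarrow> x = y"
proof -
  have "countable X" if "X \<in> U // R" for X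
    using that classes by (auto elim: quotientE)
  then have unc_quot: "uncountable (U // R)"
    using unc Union_quotient[OF eq] countable_UN[of "U // R" id] by auto
  define rep where "rep X = (SOME x. x \<in> X)" for X :: "'a set"
  have rep: "rep X \<in> X" if "X \<in> U // R" for X
    unfolding rep_def using in_quotient_imp_non_empty[OF eq that] by (simp add: some_in_eq)
  have class_rep: "R `` {rep X} = X" if X: "X \<in> U // R" for X
  proof -
    obtain a where a: "X = R `` {a}" using X by (rule quotientE)
    then have "(a, rep X) \<in> R" using rep[OF X] by simp
    then have "R `` {rep X} = R `` {a}" by (rule equiv_class_eq[OF eq, symmetric])
    also have "\<dots> = X" using a by simp
    finally show ?thesis .
  qed
  show ?thesis
  proof
    show "rep ` (U // R) \<subseteq> U"
      using rep in_quotient_imp_subset[OF eq] by blast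
    have "inj_on rep (U // R)"
      by (rule inj_on_inverseI[where g = "\<lambda>x. R `` {x}"]) (rule class_rep)
    then show "uncountable (rep ` (U // R))"
      using unc_quot countable_image_inj_on by blast
    fix x y assume "x \<in> rep ` (U // R)" "y \<in> rep ` (U // R)" "(x, y) \<in> R"
    then show "x = y"
      using class_rep equiv_class_eq[OF eq] by force
  qed
qed

definition sg_of_set :: "nat set \<Rightarrow> (nat \<times> nat) set" where
  "sg_of_set B = {(a, b). 2 \<le> a \<and> 1 \<le> b} \<union> {(1, Suc n) | n. n \<in> B}"

lemma subsemigroup_sg_of_set: "subsemigroup_NN (sg_of_set B)"
  unfolding subsemigroup_NN_def sg_of_set_def NN_def padd_def by auto

lemma inj_sg_of_set: "inj sg_of_set"
proof
  fix A B assume "sg_of_set A = sg_of_set B"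
  moreover have "n \<in> A \<longleftrightarrow> (1, Suc n) \<in> sg_of_set A" for n A
    unfolding sg_of_set_def by auto
  ultimately show "A = B" by blast
qed

lemma uncountable_range_sg_of_set: "uncountable (range sg_of_set)"
proof
  assume "countable (range sg_of_set)"
  then have "countable (UNIV :: nat set set)"
    by (rule countable_image_inj_on[OF _ inj_sg_of_set])
  then obtain f :: "nat \<Rightarrow> nat set" where "surj f"
    by (metis UNIV_not_empty uncountable_def)
  then obtain n where "f n = {m. m \<notin> f m}" by (metis rangeE UNIV_I)
  then show False by blast
qed

lemma countable_isomorphic_copies_sg_of_set: "countable {T. sg_isomorphic (sg_of_set B) T}"
proof (rule countable_isomorphic_copies)
  show "padd_closed (sg_of_set B)"
    by (rule subsemigroup_NN_padd_closed[OF subsemigroup_sg_of_set])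
  show "(2, 1) \<in> sg_of_set B" "(2, 2) \<in> sg_of_set B" "det (2, 1) (2, 2) \<noteq> 0"
    by (auto simp: sg_of_set_def det_def)
qed

theorem theoremA:
  shows "\<exists>F. uncountable F \<and> (\<forall>S\<in>F. subsemigroup_NN S) \<and>
             (\<forall>S\<in>F. \<forall>T\<in>F. S \<noteq> T \<longrightarrow> \<not> sg_isomorphic S T)"
proof -
  define U where "U = range sg_of_set"
  define R where "R = {(S, T). S \<in> U \<and> T \<in> U \<and> sg_isomorphic S T}"
  have "equiv U R"
    unfolding R_def U_def
    by (rule equiv_sg_isomorphic) (auto intro: subsemigroup_NN_padd_closed subsemigroup_sg_of_set)
  moreover have "countable (R `` {S})" if "S \<in> U" for S
    using that countable_isomorphic_copies_sg_of_set
    by (auto simp: R_def U_def intro: countable_subset[rotated])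
  ultimately obtain F where FU: "F \<subseteq> U" and "uncountable F"
    and inequiv: "\<And>S T. S \<in> F \<Longrightarrow> T \<in> F \<Longrightarrow> (S, T) \<in> R \<Longrightarrow> S = T"
    using uncountable_inequivalent_subset uncountable_range_sg_of_set unfolding U_def by metis
  have "\<forall>S\<in>F. subsemigroup_NN S"
    using FU subsemigroup_sg_of_set unfolding U_def by blast
  moreover have "\<forall>S\<in>F. \<forall>T\<in>F. S \<noteq> T \<longrightarrow> \<not> sg_isomorphic S T"
    using FU inequiv unfolding R_def by blast
  ultimately show ?thesis
    using \<open>uncountable F\<close> by blast
qed

end
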